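(* Let $\Phi$ be a $k$-CNF on $x_1,\dots,x_n$ with a mist $\mathcal M$, let $\omega=\lceil\exp(n/k^2)\rceil$, and consider the run $\sigma^{[0]},\sigma^{[1]},\dots$ of Walksat$(\Phi,\omega)$. Let $\mathcal A$ be the event $\sigma^{[0]}\notin\mathcal D(\Phi,\mathcal M)$ and let $\mathcal H=\bigcup_{\mu\in\mathcal M,\,0\le t_1<t_2\le\omega}H_\mu(t_1,t_2)$. Then $$\Pr\big[\exists t\le\omega:\sigma^{[t]}\in S(\Phi)\,\big|\,\mathcal A\big]\le\Pr[\mathcal H\mid\mathcal A].$$
   Context: $\Phi$ has $m$ clauses; $\rho=2^{-k}m/n$, $\kappa=\ln k/k$. $U_\Phi(\sigma)$ is the set of indices of clauses unsatisfied by $\sigma$, $\mathcal U_\Phi(\sigma)=|U_\Phi(\sigma)|$, $T(\Phi)=\{\tau\in\{0,1\}^n:\mathcal U_\Phi(\tau)\le n\rho/10\}$, and $S(\Phi)\subseteq T(\Phi)$ is the set of satisfying assignments. $\mathrm{dist}$ is Hamming distance; $\mathcal D_\sigma(r_1,r_2)=\{\tau:\lfloor r_1\kappa n\rfloor\le\mathrm{dist}(\sigma,\tau)\le\lfloor r_2\kappa n\rfloor\}$. A mist is a set $\mathcal M\subseteq T(\Phi)$ whose distinct elements have pairwise distance at least $2\kappa n$ and such that every $\sigma\in T(\Phi)$ is within distance $2\kappa n$ of some $\mu\in\mathcal M$. $\mathcal D(\Phi,\mathcal M)=\bigcup_{\sigma\in\mathcal M}\mathcal D_\sigma(0,10)$.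 Walksat$(\Phi,\omega)$: $\sigma^{[0]}$ uniform in $\{0,1\}^n$; at step $i=0,\dots,\omega$, if $\sigma^{[i]}$ is satisfying the algorithm halts, otherwise it picks a uniformly random unsatisfied clause and a uniformly random position $j\in[k]$ in it and flips that literal's variable to obtain $\sigma^{[i+1]}$. For $\mu\in\mathcal M$ and $t_1<t_2$, $H_\mu(t_1,t_2)$ is the event that $\mathrm{dist}(\sigma^{[t_1]},\mu)=\lfloor10\kappa n\rfloor$, $\mathrm{dist}(\sigma^{[t_2]},\mu)=\lfloor5\kappa n\rfloor$, and $\sigma^{[t]}\in\mathcal D_\mu(5,10)\setminus T(\Phi)$ for all $t_1\le t\le t_2$.
   Formalization: For each fixed k >= 2 the inequality is asserted only for all n at least some unspecified threshold n0 depending on k, rather than for every n. The paper assumes this as well. *)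

theory Defs
  imports "HOL-Probability.Probability"
begin

text \<open>Literals: a pair (i, b) stands for variable x_(i+1) if b = True and for its negation
 if b = False.\<close>

type_synonym lit = "nat \<times> bool"
type_synonym clause = "lit list"
type_synonym cnf = "clause list"
type_synonym assign = "bool list"

definition lit_sat :: "assign \<Rightarrow> lit \<Rightarrow> bool" where
  "lit_sat \<sigma> l = (\<sigma> ! fst l = snd l)"

definition clause_sat :: "assign \<Rightarrow> clause \<Rightarrow> bool" where
  "clause_sat \<sigma> c = (\<exists>l\<in>set c. lit_sat \<sigma> l)"

definition unsat_idx :: "cnf \<Rightarrow> assign \<Rightarrow> nat set" where
  "unsat_idx \<Phi> \<sigma> = {j. j < length \<Phi> \<and> \<not> clause_sat \<sigma> (\<Phi> ! j)}"

definition unsat_num :: "cnf \<Rightarrow> assign \<Rightarrow> nat" where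
  "unsat_num \<Phi> \<sigma> = card (unsat_idx \<Phi> \<sigma>)"

definition is_kCNF :: "nat \<Rightarrow> nat \<Rightarrow> cnf \<Rightarrow> bool" where
  "is_kCNF k n \<Phi> = (\<forall>c\<in>set \<Phi>. length c = k \<and> (\<forall>l\<in>set c. fst l < n))"

definition cube :: "nat \<Rightarrow> assign set" where
  "cube n = {\<sigma>. length \<sigma> = n}"

definition hdist :: "assign \<Rightarrow> assign \<Rightarrow> nat" where
  "hdist \<sigma> \<tau> = card {i. i < length \<sigma> \<and> \<sigma> ! i \<noteq> \<tau> ! i}"

definition kappa :: "nat \<Rightarrow> real" where
  "kappa k = ln (real k) / real k"

definition rho :: "nat \<Rightarrow> nat \<Rightarrow> cnf \<Rightarrow> real" where
  "rho k n \<Phi> = (1 / 2 ^ k) * real (length \<Phi>) / real n"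

definition T_set :: "nat \<Rightarrow> nat \<Rightarrow> cnf \<Rightarrow> assign set" where
  "T_set k n \<Phi> = {\<tau> \<in> cube n. real (unsat_num \<Phi> \<tau>) \<le> real n * rho k n \<Phi> / 10}"

definition S_set :: "nat \<Rightarrow> cnf \<Rightarrow> assign set" where
  "S_set n \<Phi> = {\<tau> \<in> cube n. unsat_idx \<Phi> \<tau> = {}}"

definition Dball :: "nat \<Rightarrow> nat \<Rightarrow> assign \<Rightarrow> real \<Rightarrow> real \<Rightarrow> assign set" where
  "Dball k n \<sigma> r1 r2 = {\<tau> \<in> cube n.
      \<lfloor>r1 * kappa k * real n\<rfloor> \<le> int (hdist \<sigma> \<tau>) \<and> int (hdist \<sigma> \<tau>) \<le> \<lfloor>r2 * kappa k * real n\<rfloor>}"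

definition is_mist :: "nat \<Rightarrow> nat \<Rightarrow> cnf \<Rightarrow> assign set \<Rightarrow> bool" where
  "is_mist k n \<Phi> M =
     (M \<subseteq> T_set k n \<Phi> \<and>
      (\<forall>\<mu>\<in>M. \<forall>\<mu>'\<in>M. \<mu> \<noteq> \<mu>' \<longrightarrow> real (hdist \<mu> \<mu>') \<ge> 2 * kappa k * real n) \<and>
      (\<forall>\<sigma>\<in>T_set k n \<Phi>. \<exists>\<mu>\<in>M. real (hdist \<sigma> \<mu>) \<le> 2 * kappa k * real n))"

definition Dmist :: "nat \<Rightarrow> nat \<Rightarrow> assign set \<Rightarrow> assign set" where
  "Dmist k n M = (\<Union>\<mu>\<in>M. Dball k n \<mu> 0 10)"

definition flip :: "assign \<Rightarrow> nat \<Rightarrow> assign" where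
  "flip \<sigma> i = \<sigma>[i := \<not> \<sigma> ! i]"

text \<open>Once a satisfying assignment
 is reached the algorithm halts; the trajectory is then padded by repeating the final assignment.\<close>
primrec walk_steps :: "nat \<Rightarrow> cnf \<Rightarrow> nat \<Rightarrow> assign \<Rightarrow> assign list pmf" where
  "walk_steps k \<Phi> 0 \<sigma> = return_pmf [\<sigma>]"
| "walk_steps k \<Phi> (Suc s) \<sigma> =
     (if unsat_idx \<Phi> \<sigma> = {} then return_pmf (replicate (Suc (Suc s)) \<sigma>)
      else bind_pmf (pmf_of_set (unsat_idx \<Phi> \<sigma>)) (\<lambda>j.
           bind_pmf (pmf_of_set {..<k}) (\<lambda>p.
           bind_pmf (walk_steps k \<Phi> s (flip \<sigma> (fst ((\<Phi> ! j) ! p)))) (\<lambda>rest.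
           return_pmf (\<sigma> # rest)))))"

text \<open>Walksat(Phi, omega): sigma^[0] uniform on {0,1}^n, steps i = 0..omega; the trajectory
 has entries sigma^[0..omega+1].\<close>
definition walksat :: "nat \<Rightarrow> nat \<Rightarrow> cnf \<Rightarrow> nat \<Rightarrow> assign list pmf" where
  "walksat k n \<Phi> \<omega> = bind_pmf (pmf_of_set (cube n)) (walk_steps k \<Phi> (Suc \<omega>))"

definition H_ev :: "nat \<Rightarrow> nat \<Rightarrow> cnf \<Rightarrow> assign \<Rightarrow> nat \<Rightarrow> nat \<Rightarrow> assign list set" where
  "H_ev k n \<Phi> \<mu> t1 t2 = {tr.
      int (hdist (tr ! t1) \<mu>) = \<lfloor>10 * kappa k * real n\<rfloor> \<and>
      int (hdist (tr ! t2) \<mu>) = \<lfloor>5 * kappa k * real n\<rfloor> \<and>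
      (\<forall>t. t1 \<le> t \<and> t \<le> t2 \<longrightarrow> tr ! t \<in> Dball k n \<mu> 5 10 - T_set k n \<Phi>)}"

definition cond_prob :: "'a pmf \<Rightarrow> 'a set \<Rightarrow> 'a set \<Rightarrow> real" where
  "cond_prob P E A = measure_pmf.prob P (E \<inter> A) / measure_pmf.prob P A"

end

theory Submission
  imports Defs
begin

text \<open>Walksat changes at most one coordinate per step, so the distance of the trajectory to a
  fixed centre \<open>\<mu>\<close> moves by at most one per step.  A run that starts outside \<open>\<D>(\<Phi>, \<M>)\<close>
  (distance \<open>> \<lfloor>10\<kappa>n\<rfloor>\<close> from every \<open>\<mu> \<in> \<M>\<close>) and later satisfies \<open>\<Phi>\<close> must enter
  \<open>T(\<Phi>)\<close>; at the first entry it lies within \<open>2\<kappa>n < \<lfloor>5\<kappa>n\<rfloor>\<close> of some \<open>\<mu> \<in> \<M>\<close>, and before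
  that it stayed outside \<open>T(\<Phi>)\<close>.  The last visit to the sphere of radius \<open>\<lfloor>10\<kappa>n\<rfloor>\<close> followed
  by the first visit to the sphere of radius \<open>\<lfloor>5\<kappa>n\<rfloor>\<close> around \<open>\<mu>\<close> is then an instance of
  \<open>H\<^sub>\<mu>(t\<^sub>1, t\<^sub>2)\<close>.  So the success event is contained in \<open>\<H>\<close> on every trajectory, and the
  inequality of conditional probabilities follows by monotonicity.\<close>

lemma length_flip [simp]: "length (flip \<sigma> j) = length \<sigma>"
  by (simp add: flip_def)

lemma flip_flip [simp]: "flip (flip \<sigma> j) j = \<sigma>"
  by (cases "j < length \<sigma>") (simp_all add: flip_def list_update_beyond)

lemma hdist_commute: "length \<sigma> = length \<tau> \<Longrightarrow> hdist \<sigma> \<tau> = hdist \<tau> \<sigma>"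
  unfolding hdist_def by (metis (no_types, lifting) Collect_cong)

lemma hdist_flip_le: "hdist (flip \<sigma> j) \<mu> \<le> hdist \<sigma> \<mu> + 1"
proof -
  let ?D = "{i. i < length \<sigma> \<and> \<sigma> ! i \<noteq> \<mu> ! i}"
  have "hdist (flip \<sigma> j) \<mu> \<le> card (insert j ?D)"
    unfolding hdist_def by (rule card_mono) (auto simp: flip_def nth_list_update)
  also have "\<dots> \<le> hdist \<sigma> \<mu> + 1"
    by (simp add: hdist_def card_insert_if)
  finally show ?thesis .
qed

lemma hdist_flip_diff: "\<bar>int (hdist (flip \<sigma> j) \<mu>) - int (hdist \<sigma> \<mu>)\<bar> \<le> 1"
  using hdist_flip_le[of \<sigma> j \<mu>] hdist_flip_le[of "flip \<sigma> j" j \<mu>] by simp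

lemma finite_cube: "finite (cube n)"
  using finite_lists_length_eq[of "UNIV :: bool set" n] by (simp add: cube_def)

lemma cube_nonempty: "cube n \<noteq> {}"
  by (auto simp: cube_def intro!: exI[of _ "replicate n True"])

lemma set_pmf_walk_steps:
  assumes "tr \<in> set_pmf (walk_steps k \<Phi> s \<sigma>)"
  shows "length tr = Suc s" "tr ! 0 = \<sigma>"
    and "\<And>i. i < s \<Longrightarrow> tr ! Suc i = tr ! i \<or> (\<exists>j. tr ! Suc i = flip (tr ! i) j)"
proof -
  have "length tr = Suc s \<and> tr ! 0 = \<sigma> \<and>
    (\<forall>i<s. tr ! Suc i = tr ! i \<or> (\<exists>j. tr ! Suc i = flip (tr ! i) j))"
    using assms
  proof (induction s arbitrary: \<sigma> tr)
    case 0
    then show ?case by simp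
  next
    case (Suc s)
    show ?case
    proof (cases "unsat_idx \<Phi> \<sigma> = {}")
      case True
      then show ?thesis using Suc.prems by (auto simp del: replicate.simps)
    next
      case False
      with Suc.prems obtain j rest where
        rest: "rest \<in> set_pmf (walk_steps k \<Phi> s (flip \<sigma> j))" and tr: "tr = \<sigma> # rest"
        by (auto simp: set_bind_pmf)
      note IH = Suc.IH[OF rest]
      have "tr ! Suc i = tr ! i \<or> (\<exists>j. tr ! Suc i = flip (tr ! i) j)" if "i < Suc s" for i
        using that IH tr by (cases i) auto
      then show ?thesis using IH tr by simp
    qed
  qed
  then show "length tr = Suc s" "tr ! 0 = \<sigma>"
    and "\<And>i. i < s \<Longrightarrow> tr ! Suc i = tr ! i \<or> (\<exists>j. tr ! Suc i = flip (tr ! i) j)"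
    by auto
qed

lemma walk_steps_length_nth:
  assumes "tr \<in> set_pmf (walk_steps k \<Phi> s \<sigma>)" "i \<le> s"
  shows "length (tr ! i) = length \<sigma>"
  using assms(2)
proof (induction i)
  case 0
  then show ?case using set_pmf_walk_steps(2)[OF assms(1)] by simp
next
  case (Suc i)
  then show ?case using set_pmf_walk_steps(3)[OF assms(1), of i] by auto
qed

lemma walk_steps_hdist_step:
  assumes "tr \<in> set_pmf (walk_steps k \<Phi> s \<sigma>)" "i < s"
  shows "\<bar>int (hdist (tr ! Suc i) \<mu>) - int (hdist (tr ! i) \<mu>)\<bar> \<le> 1"
  using set_pmf_walk_steps(3)[OF assms] hdist_flip_diff by auto

lemma set_pmf_walksat:
  assumes "tr \<in> set_pmf (walksat k n \<Phi> \<omega>)"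
  obtains \<sigma> where "\<sigma> \<in> cube n" "tr \<in> set_pmf (walk_steps k \<Phi> (Suc \<omega>) \<sigma>)"
  using assms finite_cube cube_nonempty by (auto simp: walksat_def set_bind_pmf)

text \<open>A discrete intermediate value theorem: take \<open>t\<^sub>1\<close> the last time at level \<open>\<ge> a\<close> and
  \<open>t\<^sub>2\<close> the first time after \<open>t\<^sub>1\<close> at level \<open>\<le> b\<close>.\<close>

lemma unit_step_crossing:
  fixes f :: "nat \<Rightarrow> int"
  assumes step: "\<And>i. i < s \<Longrightarrow> \<bar>f (Suc i) - f i\<bar> \<le> 1"
    and start: "a \<le> f 0" and stop: "f s < b" and "b < a"
  obtains t1 t2 where "t1 < t2" "t2 < s" "f t1 = a" "f t2 = b"
    "\<And>t. t1 \<le> t \<Longrightarrow> t \<le> t2 \<Longrightarrow> b \<le> f t \<and> f t \<le> a"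
proof -
  define t1 where "t1 = (GREATEST t. t \<le> s \<and> a \<le> f t)"
  have t1: "t1 \<le> s" "a \<le> f t1"
    using GreatestI_nat[of "\<lambda>t. t \<le> s \<and> a \<le> f t" 0 s] start by (auto simp: t1_def)
  have below_a: "f t < a" if "t1 < t" "t \<le> s" for t
    using Greatest_le_nat[of "\<lambda>t. t \<le> s \<and> a \<le> f t" t s] that by (force simp: t1_def)
  have "t1 < s"
    using t1 stop \<open>b < a\<close> by (metis le_less not_le order.strict_trans)
  then have ft1: "f t1 = a"
    using step[of t1] below_a[of "Suc t1"] t1 by linarith
  define t2 where "t2 = (LEAST t. t1 < t \<and> f t \<le> b)"
  have t2: "t1 < t2" "f t2 \<le> b"
    using LeastI[of "\<lambda>t. t1 < t \<and> f t \<le> b" s] \<open>t1 < s\<close> stop by (auto simp: t2_def)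
  have above_b: "b < f t" if "t1 < t" "t < t2" for t
    using not_less_Least[of t "\<lambda>t. t1 < t \<and> f t \<le> b"] that by (auto simp: t2_def)
  have "t2 \<le> s"
    using Least_le[of "\<lambda>t. t1 < t \<and> f t \<le> b" s] \<open>t1 < s\<close> stop by (auto simp: t2_def)
  obtain p where p: "t2 = Suc p"
    using t2 by (cases t2) auto
  have "b < f p"
    using above_b[of p] ft1 \<open>b < a\<close> p t2(1) by (cases "p = t1") auto
  then have ft2: "f t2 = b"
    using step[of p] p \<open>t2 \<le> s\<close> t2(2) by fastforce
  with stop \<open>t2 \<le> s\<close> have "t2 < s"
    by (cases "t2 = s") auto
  have "b \<le> f t \<and> f t \<le> a" if "t1 \<le> t" "t \<le> t2" for t
    using that ft1 ft2 \<open>b < a\<close> \<open>t2 \<le> s\<close> below_a[of t] above_b[of t]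
    by (cases "t = t1"; cases "t = t2") auto
  with that t2(1) \<open>t2 < s\<close> ft1 ft2 show ?thesis .
qed

lemma walksat_success_crosses_annulus:
  assumes "1 < kappa k * real n" and mist: "is_mist k n \<Phi> M"
    and walk: "tr \<in> set_pmf (walksat k n \<Phi> \<omega>)"
    and success: "t0 \<le> \<omega>" "tr ! t0 \<in> S_set n \<Phi>"
    and start: "tr ! 0 \<notin> Dmist k n M"
  obtains \<mu> t1 t2 where "\<mu> \<in> M" "t1 < t2" "t2 \<le> \<omega>" "tr \<in> H_ev k n \<Phi> \<mu> t1 t2"
proof -
  obtain \<sigma> where \<sigma>: "\<sigma> \<in> cube n" and tr: "tr \<in> set_pmf (walk_steps k \<Phi> (Suc \<omega>) \<sigma>)"
    using set_pmf_walksat[OF walk] .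
  have "tr ! t0 \<in> T_set k n \<Phi>"
    using success by (auto simp: S_set_def T_set_def unsat_num_def rho_def)
  then obtain s where s: "tr ! s \<in> T_set k n \<Phi>"
    and before_s: "\<And>t. t < s \<Longrightarrow> tr ! t \<notin> T_set k n \<Phi>"
    using exists_least_iff[of "\<lambda>t. tr ! t \<in> T_set k n \<Phi>"] by blast
  have "s \<le> \<omega>"
    using before_s[of t0] \<open>tr ! t0 \<in> T_set k n \<Phi>\<close> success(1) by linarith
  obtain \<mu> where \<mu>: "\<mu> \<in> M" "real (hdist (tr ! s) \<mu>) \<le> 2 * kappa k * real n"
    using mist s by (auto simp: is_mist_def)
  have len_\<mu>: "length \<mu> = n"
    using mist \<mu>(1) by (auto simp: is_mist_def T_set_def cube_def)
  have len_tr: "length (tr ! t) = n" if "t \<le> Suc \<omega>" for t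
    using walk_steps_length_nth[OF tr that] \<sigma> by (simp add: cube_def)
  define f where "f t = int (hdist (tr ! t) \<mu>)" for t
  define a where "a = \<lfloor>10 * kappa k * real n\<rfloor>"
  define b where "b = \<lfloor>5 * kappa k * real n\<rfloor>"
  have "\<sigma> \<notin> Dball k n \<mu> 0 10"
    using start \<mu>(1) set_pmf_walk_steps(2)[OF tr] by (auto simp: Dmist_def)
  then have "a \<le> f 0"
    using \<sigma> len_\<mu> set_pmf_walk_steps(2)[OF tr] hdist_commute[of \<mu> \<sigma>]
    by (auto simp: Dball_def cube_def f_def a_def)
  moreover have "f s < b"
    unfolding f_def b_def using \<mu>(2) \<open>1 < kappa k * real n\<close> by linarith
  moreover have "b < a"
    unfolding a_def b_def using \<open>1 < kappa k * real n\<close> by linarith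
  moreover have "\<bar>f (Suc i) - f i\<bar> \<le> 1" if "i < s" for i
    using walk_steps_hdist_step[OF tr] that \<open>s \<le> \<omega>\<close> by (simp add: f_def)
  ultimately obtain t1 t2 where t: "t1 < t2" "t2 < s" "f t1 = a" "f t2 = b"
    and between: "\<And>t. t1 \<le> t \<Longrightarrow> t \<le> t2 \<Longrightarrow> b \<le> f t \<and> f t \<le> a"
    using unit_step_crossing[of s f a b] by blast
  have "tr ! t \<in> Dball k n \<mu> 5 10 - T_set k n \<Phi>" if "t1 \<le> t" "t \<le> t2" for t
  proof -
    have "t < s"
      using that t(2) by simp
    have "length (tr ! t) = n"
      using len_tr \<open>t < s\<close> \<open>s \<le> \<omega>\<close> by simp
    then show ?thesis
      using between[OF that] before_s[OF \<open>t < s\<close>] len_\<mu> hdist_commute[of \<mu> "tr ! t"]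
      by (auto simp: Dball_def cube_def f_def a_def b_def)
  qed
  then have "tr \<in> H_ev k n \<Phi> \<mu> t1 t2"
    using t by (simp add: H_ev_def f_def a_def b_def)
  moreover have "t2 \<le> \<omega>"
    using t(2) \<open>s \<le> \<omega>\<close> by simp
  ultimately show ?thesis
    using that \<mu>(1) t(1) by blast
qed

lemma cond_prob_mono_on_support:
  assumes "E \<inter> A \<inter> set_pmf P \<subseteq> H"
  shows "cond_prob P E A \<le> cond_prob P H A"
proof -
  have "measure_pmf.prob P (E \<inter> A) = measure_pmf.prob P (E \<inter> A \<inter> set_pmf P)"
    by (simp add: measure_Int_set_pmf)
  also have "\<dots> \<le> measure_pmf.prob P (H \<inter> A)"
    using assms by (intro measure_pmf.finite_measure_mono) auto
  finally show ?thesis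
    unfolding cond_prob_def by (intro divide_right_mono) auto
qed

lemma kappa_mult_eventually_gt_1:
  assumes "k \<ge> 2"
  shows "\<exists>n0. \<forall>n\<ge>n0. 1 < kappa k * real n"
proof -
  have "kappa k > 0"
    using assms by (simp add: kappa_def ln_gt_zero)
  obtain n0 :: nat where "1 / kappa k < real n0"
    using reals_Archimedean2 by blast
  then have "1 < kappa k * real n" if "n \<ge> n0" for n
    using that \<open>kappa k > 0\<close> by (simp add: field_simps) (smt (verit) of_nat_mono mult_left_mono)
  then show ?thesis by blast
qed

theorem mainTheorem5:
  fixes k :: nat
  assumes "k \<ge> 2"
  shows "\<exists>n0. \<forall>n\<ge>n0. \<forall>(\<Phi>::cnf) (M::assign set).
    is_kCNF k n \<Phi> \<longrightarrow> is_mist k n \<Phi> M \<longrightarrow>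
    (let \<omega> = nat \<lceil>exp (real n / real k ^ 2)\<rceil>;
         P = walksat k n \<Phi> \<omega>;
         A = {tr. tr ! 0 \<notin> Dmist k n M};
         H = (\<Union>\<mu>\<in>M. \<Union>t1. \<Union>t2\<in>{t. t1 < t \<and> t \<le> \<omega>}. H_ev k n \<Phi> \<mu> t1 t2)
     in cond_prob P {tr. \<exists>t\<le>\<omega>. tr ! t \<in> S_set n \<Phi>} A \<le> cond_prob P H A)"
proof -
  obtain n0 where n0: "\<And>n. n \<ge> n0 \<Longrightarrow> 1 < kappa k * real n"
    using kappa_mult_eventually_gt_1[OF assms] by blast
  have "cond_prob (walksat k n \<Phi> \<omega>) {tr. \<exists>t\<le>\<omega>. tr ! t \<in> S_set n \<Phi>} {tr. tr ! 0 \<notin> Dmist k n M}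
      \<le> cond_prob (walksat k n \<Phi> \<omega>)
          (\<Union>\<mu>\<in>M. \<Union>t1. \<Union>t2\<in>{t. t1 < t \<and> t \<le> \<omega>}. H_ev k n \<Phi> \<mu> t1 t2) {tr. tr ! 0 \<notin> Dmist k n M}"
    if "n \<ge> n0" "is_mist k n \<Phi> M" for n \<Phi> M \<omega>
  proof (rule cond_prob_mono_on_support, clarify)
    fix tr t0
    assume "t0 \<le> \<omega>" "tr ! t0 \<in> S_set n \<Phi>" "tr ! 0 \<notin> Dmist k n M"
      "tr \<in> set_pmf (walksat k n \<Phi> \<omega>)"
    with n0[OF that(1)] that(2) show "tr \<in> (\<Union>\<mu>\<in>M. \<Union>t1. \<Union>t2\<in>{t. t1 < t \<and> t \<le> \<omega>}. H_ev k n \<Phi> \<mu> t1 t2)"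
      by (elim walksat_success_crosses_annulus) blast+
  qed
  then show ?thesis
    unfolding Let_def by blast
qed

end
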